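(* Let $W_1,\ldots,W_f$ be mutually quasi-unbiased weighing matrices for parameters $(nm,k,k^2,1)$, and assume that $W_i(I_n\otimes J_m)$ is a $(0,1,-1)$-matrix for every $i\in\{1,\ldots,f\}$. Let $K$ be an orthogonal design of order $m$ and type $(s_1,\ldots,s_u)$ in variables $x_1,\ldots,x_u$. Then there exist $f$ mutually unbiased orthogonal designs of order $nm$ and type $(ks_1,\ldots,ks_u)$ with parameter $\alpha=k^2$.
   Context: $J_m$ is the $m\times m$ all-ones matrix. A weighing matrix of order $N$ and weight $k$ is an $N\times N$ $(0,1,-1)$-matrix $W$ with $WW^\top=kI_N$; weighing matrices $W_1,W_2$ of order $N$ and weight $k$ are quasi-unbiased for parameters $(N,k,l,a)$ if $\frac1{\sqrt a}W_1W_2^\top$ is a weighing matrix of order $N$ and weight $l$; mutually quasi-unbiased means pairwise. An orthogonal design of order $N$ and type $(t_1,\ldots,t_u)$ in distinct commuting real indeterminates $x_1,\ldots,x_u$ is an $N\times N$ matrix $D$ with entries in $\{0,\pm x_1,\ldots,\pm x_u\}$ with $DD^\top=(t_1x_1^2+\cdots+t_ux_u^2)I_N$. Orthogonal designs of the same order and type $(t_1,\ldots,t_u)$ in the same variables are mutually unbiased with parameter $\alpha$ if $\alpha>0$ and for any two distinct members $D,D'$ there is a $(0,1,-1)$-matrix $V$ with $DD'^\top=\frac{t_1x_1^2+\cdots+t_ux_u^2}{\sqrt\alpha}V$. *)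

theory Defs
  imports Complex_Main
begin

text \<open>Square matrices of order N are functions nat => nat => 'a, only the
entries with indices < N are relevant (0-based indices).\<close>

definition mat_mult_T :: "nat \<Rightarrow> (nat \<Rightarrow> nat \<Rightarrow> 'a::comm_semiring_0) \<Rightarrow> (nat \<Rightarrow> nat \<Rightarrow> 'a) \<Rightarrow> nat \<Rightarrow> nat \<Rightarrow> 'a"
  where "mat_mult_T N A B r c = (\<Sum>l<N. A r l * B c l)"

definition zpm_matrix :: "nat \<Rightarrow> (nat \<Rightarrow> nat \<Rightarrow> 'a::{one,uminus,zero}) \<Rightarrow> bool"
  where "zpm_matrix N A \<longleftrightarrow> (\<forall>r<N. \<forall>c<N. A r c \<in> {0, 1, -1})"

definition weighing_matrix :: "nat \<Rightarrow> nat \<Rightarrow> (nat \<Rightarrow> nat \<Rightarrow> real) \<Rightarrow> bool"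
  where "weighing_matrix N k W \<longleftrightarrow> zpm_matrix N W \<and>
     (\<forall>r<N. \<forall>c<N. mat_mult_T N W W r c = (if r = c then real k else 0))"

definition quasi_unbiased :: "nat \<Rightarrow> nat \<Rightarrow> nat \<Rightarrow> real \<Rightarrow> (nat \<Rightarrow> nat \<Rightarrow> real) \<Rightarrow> (nat \<Rightarrow> nat \<Rightarrow> real) \<Rightarrow> bool"
  where "quasi_unbiased N k l a W1 W2 \<longleftrightarrow> weighing_matrix N k W1 \<and> weighing_matrix N k W2 \<and>
     weighing_matrix N l (\<lambda>r c. mat_mult_T N W1 W2 r c / sqrt a)"

definition I_kron_J :: "nat \<Rightarrow> nat \<Rightarrow> nat \<Rightarrow> real"
  where "I_kron_J m p q = (if p div m = q div m then 1 else 0)"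

definition mat_mult :: "nat \<Rightarrow> (nat \<Rightarrow> nat \<Rightarrow> 'a::comm_semiring_0) \<Rightarrow> (nat \<Rightarrow> nat \<Rightarrow> 'a) \<Rightarrow> nat \<Rightarrow> nat \<Rightarrow> 'a"
  where "mat_mult N A B r c = (\<Sum>l<N. A r l * B l c)"

text \<open>An entry is a
linear form given by its integer coefficient vector over the variables; it must be
0 or \<plusminus>x_j for some j<u.  Identities between polynomials in the commuting real
indeterminates are expressed as identities for all real values of the variables.\<close>

definition od_entry :: "nat \<Rightarrow> (nat \<Rightarrow> int) \<Rightarrow> bool"
  where "od_entry u e \<longleftrightarrow> (\<forall>j. e j \<in> {0, 1, -1}) \<and> (\<forall>j\<ge>u. e j = 0) \<and>
     (\<forall>i j. e i \<noteq> 0 \<longrightarrow> e j \<noteq> 0 \<longrightarrow> i = j)"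

definition od_eval :: "nat \<Rightarrow> (nat \<Rightarrow> nat \<Rightarrow> nat \<Rightarrow> int) \<Rightarrow> (nat \<Rightarrow> real) \<Rightarrow> nat \<Rightarrow> nat \<Rightarrow> real"
  where "od_eval u D x r c = (\<Sum>j<u. of_int (D r c j) * x j)"

definition od_form :: "nat \<Rightarrow> (nat \<Rightarrow> nat) \<Rightarrow> (nat \<Rightarrow> real) \<Rightarrow> real"
  where "od_form u t x = (\<Sum>j<u. real (t j) * (x j)\<^sup>2)"

definition orthogonal_design :: "nat \<Rightarrow> nat \<Rightarrow> (nat \<Rightarrow> nat) \<Rightarrow> (nat \<Rightarrow> nat \<Rightarrow> nat \<Rightarrow> int) \<Rightarrow> bool"
  where "orthogonal_design N u t D \<longleftrightarrow>
     (\<forall>r<N. \<forall>c<N. od_entry u (D r c)) \<and>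
     (\<forall>x. \<forall>r<N. \<forall>c<N. mat_mult_T N (od_eval u D x) (od_eval u D x) r c
                        = (if r = c then od_form u t x else 0))"

definition mutually_unbiased_ODs :: "nat \<Rightarrow> nat \<Rightarrow> (nat \<Rightarrow> nat) \<Rightarrow> real \<Rightarrow> nat \<Rightarrow> (nat \<Rightarrow> nat \<Rightarrow> nat \<Rightarrow> nat \<Rightarrow> int) \<Rightarrow> bool"
  where "mutually_unbiased_ODs N u t \<alpha> f D \<longleftrightarrow> \<alpha> > 0 \<and>
     (\<forall>i<f. orthogonal_design N u t (D i)) \<and>
     (\<forall>i<f. \<forall>j<f. i \<noteq> j \<longrightarrow> (\<exists>V :: nat \<Rightarrow> nat \<Rightarrow> int. zpm_matrix N V \<and>
        (\<forall>x. \<forall>r<N. \<forall>c<N. mat_mult_T N (od_eval u (D i) x) (od_eval u (D j) x) r c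
                 = od_form u t x / sqrt \<alpha> * of_int (V r c))))"

end

theory Submission
  imports Defs "Jordan_Normal_Form.Determinant"
begin

text \<open>Take \<open>D\<^sub>i = W\<^sub>i (I\<^sub>n \<otimes> K)\<close>. Since \<open>K K\<^sup>T = (\<Sum>s\<^sub>j x\<^sub>j\<^sup>2) I\<^sub>m\<close>, one gets
\<open>D\<^sub>i D\<^sub>j\<^sup>T = (\<Sum>s\<^sub>j x\<^sub>j\<^sup>2) W\<^sub>i W\<^sub>j\<^sup>T\<close>: for \<open>i = j\<close> this is \<open>(\<Sum>k s\<^sub>j x\<^sub>j\<^sup>2) I\<close>, and for
\<open>i \<noteq> j\<close> the matrix \<open>W\<^sub>i W\<^sub>j\<^sup>T\<close> has entries in \<open>{0,\<plusminus>1}\<close> by quasi-unbiasedness with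
\<open>a = 1\<close>, while \<open>\<Sum>k s\<^sub>j x\<^sub>j\<^sup>2 / \<surd>(k\<^sup>2) = \<Sum>s\<^sub>j x\<^sub>j\<^sup>2\<close>. The entries of \<open>D\<^sub>i\<close> are of the form
\<open>0, \<plusminus>x\<^sub>j\<close> because the hypothesis on \<open>W\<^sub>i (I\<^sub>n \<otimes> J\<^sub>m)\<close> forces every row of \<open>W\<^sub>i\<close> to have at
most one nonzero entry in each block of \<open>m\<close> consecutive columns.\<close>

lemma sum_lessThan_mult_blocks:
  fixes g :: "nat \<Rightarrow> 'a::comm_monoid_add"
  shows "(\<Sum>l<n * m. g l) = (\<Sum>b<n. \<Sum>q<m. g (b * m + q))"
proof -
  have "(\<Sum>l\<in>{b * m..<b * m + m}. g l) = (\<Sum>q<m. g (b * m + q))" for b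
    using sum.shift_bounds_nat_ivl[of g 0 "b * m" m] by (simp add: atLeast0LessThan add.commute)
  then show ?thesis by (simp add: sum.nat_group[symmetric])
qed

lemma block_index_less:
  fixes b q n m :: nat
  assumes "b < n" "q < m"
  shows "b * m + q < n * m"
proof -
  have "b * m + q < (b + 1) * m" using assms by simp
  also have "\<dots> \<le> n * m" using assms by (intro mult_right_mono) auto
  finally show ?thesis .
qed

lemma weighing_matrix_columns_orthogonal:
  assumes W: "weighing_matrix N k W" and k: "0 < k" and a: "a < N" and b: "b < N"
  shows "(\<Sum>r<N. W r a * W r b) = (if a = b then real k else 0)"
proof -
  define A where "A = mat N N (\<lambda>(i, j). W i j)"
  define B where "B = mat N N (\<lambda>(i, j). W j i / real k)"
  have A: "A \<in> carrier_mat N N" and B: "B \<in> carrier_mat N N" by (auto simp: A_def B_def)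
  have "A * B = 1\<^sub>m N"
  proof (rule eq_matI)
    fix i j assume ij: "i < dim_row (1\<^sub>m N)" "j < dim_col (1\<^sub>m N)"
    have "(A * B) $$ (i, j) = mat_mult_T N W W i j / real k"
      using ij by (simp add: A_def B_def scalar_prod_def lessThan_atLeast0 mat_mult_T_def sum_divide_distrib)
    also have "\<dots> = 1\<^sub>m N $$ (i, j)" using W ij k unfolding weighing_matrix_def by auto
    finally show "(A * B) $$ (i, j) = 1\<^sub>m N $$ (i, j)" .
  qed (auto simp: A_def B_def)
  then have "B * A = 1\<^sub>m N" using mat_mult_left_right_inverse[OF A B] by blast
  moreover have "(B * A) $$ (a, b) = (\<Sum>r<N. W r a * W r b) / real k"
    using a b by (simp add: A_def B_def scalar_prod_def lessThan_atLeast0 sum_divide_distrib)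
  ultimately show ?thesis using a b k by (auto split: if_splits)
qed

lemma mat_mult_I_kron_J:
  assumes "b < n" "q < m"
  shows "mat_mult (n * m) W (I_kron_J m) r (b * m + q) = (\<Sum>q'<m. W r (b * m + q'))"
proof -
  have "mat_mult (n * m) W (I_kron_J m) r (b * m + q)
      = (\<Sum>b'<n. \<Sum>q'<m. W r (b' * m + q') * (if b' = b then 1 else 0))"
    using assms by (simp add: mat_mult_def I_kron_J_def sum_lessThan_mult_blocks)
  also have "\<dots> = (\<Sum>b'<n. if b' = b then (\<Sum>q'<m. W r (b' * m + q')) else 0)"
    by (intro sum.cong) auto
  finally show ?thesis using assms by simp
qed

lemma weighing_matrix_block_sq_sum_le_1:
  fixes W :: "nat \<Rightarrow> nat \<Rightarrow> real"
  assumes W: "weighing_matrix (n * m) k W" and k: "0 < k"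
    and kron: "zpm_matrix (n * m) (mat_mult (n * m) W (I_kron_J m))"
    and r0: "r0 < n * m" and b0: "b0 < n"
  shows "(\<Sum>q<m. (W r0 (b0 * m + q))\<^sup>2) \<le> 1"
  \<comment> \<open>The block sums \<open>\<beta>\<close> lie in \<open>{0,\<plusminus>1}\<close>, so \<open>\<beta>\<^sup>2 \<le> c\<close>, the number of nonzero entries of the
     block, strictly if a block has two of them. Row orthogonality gives \<open>\<Sum>c = N k\<close> and
     column orthogonality gives \<open>\<Sum>\<beta>\<^sup>2 = N k\<close>.\<close>
proof (rule ccontr)
  assume more_than_one: "\<not> ?thesis"
  define N where "N = n * m"
  define \<beta> where "\<beta> r b = (\<Sum>q<m. W r (b * m + q))" for r b
  define c where "c r b = (\<Sum>q<m. (W r (b * m + q))\<^sup>2)" for r b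
  have \<beta>_zpm: "\<beta> r b \<in> {0, 1, -1}" if "r < N" "b < n" for r b
  proof (cases "m = 0")
    case False
    then have "b * m < N" using block_index_less[OF that(2), of 0 m] by (simp add: N_def)
    then show ?thesis
      using kron that mat_mult_I_kron_J[OF that(2), of 0 m W r] False
      unfolding zpm_matrix_def N_def \<beta>_def by (metis add_0_right not_gr_zero)
  qed (simp add: \<beta>_def)
  have \<beta>_le_c: "(\<beta> r b)\<^sup>2 \<le> c r b" if "r < N" "b < n" for r b
  proof (cases "\<beta> r b = 0")
    case False
    then obtain q where q: "q < m" "W r (b * m + q) \<noteq> 0"
      unfolding \<beta>_def by (meson sum.neutral lessThan_iff)
    have "W r (b * m + q) \<in> {0, 1, -1}"
      using W that q block_index_less[OF that(2) q(1)] unfolding weighing_matrix_def zpm_matrix_def N_def by blast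
    then have "1 \<le> c r b"
      unfolding c_def using q member_le_sum[of q "{..<m}" "\<lambda>q. (W r (b * m + q))\<^sup>2"] by auto
    then show ?thesis using \<beta>_zpm[OF that] by auto
  qed (simp add: c_def sum_nonneg)
  have "(\<beta> r0 b0)\<^sup>2 < c r0 b0"
    using \<beta>_zpm[OF r0[folded N_def] b0] more_than_one unfolding c_def by auto
  then have "(\<Sum>b<n. (\<beta> r0 b)\<^sup>2) < (\<Sum>b<n. c r0 b)"
    using b0 r0 \<beta>_le_c by (intro sum_strict_mono_ex1) (auto simp: N_def)
  then have "(\<Sum>r<N. \<Sum>b<n. (\<beta> r b)\<^sup>2) < (\<Sum>r<N. \<Sum>b<n. c r b)"
    using r0 \<beta>_le_c by (intro sum_strict_mono_ex1) (auto simp: N_def intro!: sum_mono)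
  also have "\<dots> = (\<Sum>r<N. mat_mult_T N W W r r)"
    by (simp add: c_def mat_mult_T_def N_def power2_eq_square sum_lessThan_mult_blocks)
  also have "\<dots> = real N * real k"
    using W unfolding weighing_matrix_def N_def by simp
  also have "\<dots> = (\<Sum>b<n. \<Sum>q<m. \<Sum>q'<m. \<Sum>r<N. W r (b * m + q) * W r (b * m + q'))"
    using weighing_matrix_columns_orthogonal[OF W k] block_index_less[of _ n _ m]
    by (simp add: N_def)
  also have "\<dots> = (\<Sum>r<N. \<Sum>b<n. (\<beta> r b)\<^sup>2)"
    by (simp add: \<beta>_def power2_eq_square sum_product sum.swap[of _ "{..<N}"])
  finally show False by simp
qed

lemma weighing_matrix_block_support_unique:
  fixes W :: "nat \<Rightarrow> nat \<Rightarrow> real"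
  assumes W: "weighing_matrix (n * m) k W" and k: "0 < k"
    and kron: "zpm_matrix (n * m) (mat_mult (n * m) W (I_kron_J m))"
    and r: "r < n * m" and l: "l1 < n * m" "l2 < n * m" "l1 div m = l2 div m"
    and nonzero: "W r l1 \<noteq> 0" "W r l2 \<noteq> 0"
  shows "l1 = l2"
proof (rule ccontr)
  assume "l1 \<noteq> l2"
  define b where "b = l1 div m"
  have m: "0 < m" using l by (cases m) auto
  have b: "b < n" using l(1) by (simp add: b_def less_mult_imp_div_less)
  have blocks: "l1 = b * m + l1 mod m" "l2 = b * m + l2 mod m"
    unfolding b_def using l(3) by (metis div_mult_mod_eq)+
  have "l1 mod m \<noteq> l2 mod m" using \<open>l1 \<noteq> l2\<close> blocks by auto
  have sq: "(W r l)\<^sup>2 = 1" if "l < n * m" "W r l \<noteq> 0" for l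
    using W r that unfolding weighing_matrix_def zpm_matrix_def by fastforce
  have "2 = (\<Sum>q\<in>{l1 mod m, l2 mod m}. (W r (b * m + q))\<^sup>2)"
    using \<open>l1 mod m \<noteq> l2 mod m\<close> sq[OF l(1) nonzero(1)] sq[OF l(2) nonzero(2)]
    by (simp flip: blocks)
  also have "\<dots> \<le> (\<Sum>q<m. (W r (b * m + q))\<^sup>2)"
    using m by (intro sum_mono2) auto
  also have "\<dots> \<le> 1"
    by (rule weighing_matrix_block_sq_sum_le_1[OF W k kron r b])
  finally show False by simp
qed

definition I_kron :: "nat \<Rightarrow> (nat \<Rightarrow> nat \<Rightarrow> 'a::zero) \<Rightarrow> nat \<Rightarrow> nat \<Rightarrow> 'a"
  where "I_kron m E p q = (if p div m = q div m then E (p mod m) (q mod m) else 0)"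

lemma mat_mult_T_I_kron:
  fixes E :: "nat \<Rightarrow> nat \<Rightarrow> 'a::comm_semiring_0"
  assumes E: "\<forall>p<m. \<forall>q<m. mat_mult_T m E E p q = (if p = q then F else 0)"
    and p: "p < n * m" and q: "q < n * m"
  shows "mat_mult_T (n * m) (I_kron m E) (I_kron m E) p q = (if p = q then F else 0)"
proof -
  have m: "0 < m" using p by (cases m) auto
  have "mat_mult_T (n * m) (I_kron m E) (I_kron m E) p q
      = (\<Sum>b<n. \<Sum>t<m. (if p div m = b then E (p mod m) t else 0) * (if q div m = b then E (q mod m) t else 0))"
    unfolding mat_mult_T_def I_kron_def sum_lessThan_mult_blocks by (intro sum.cong) auto
  also have "\<dots> = (\<Sum>b<n. if p div m = b \<and> q div m = b then mat_mult_T m E E (p mod m) (q mod m) else 0)"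
    by (intro sum.cong) (auto simp: mat_mult_T_def)
  also have "\<dots> = (if p div m = q div m then mat_mult_T m E E (p mod m) (q mod m) else 0)"
    using less_mult_imp_div_less[OF p] by (cases "p div m = q div m") (auto intro!: sum.neutral)
  also have "\<dots> = (if p = q then F else 0)"
    using E m by (auto, metis div_mult_mod_eq)
  finally show ?thesis .
qed

lemma mat_mult_T_mat_mult_orthogonal_right:
  fixes M :: "nat \<Rightarrow> nat \<Rightarrow> 'a::comm_semiring_0"
  assumes M: "\<forall>p<N. \<forall>q<N. mat_mult_T N M M p q = (if p = q then F else 0)"
  shows "mat_mult_T N (mat_mult N A M) (mat_mult N B M) r c = F * mat_mult_T N A B r c"
proof -
  have "mat_mult_T N (mat_mult N A M) (mat_mult N B M) r c
      = (\<Sum>l<N. \<Sum>p<N. \<Sum>q<N. A r p * B c q * (M p l * M q l))"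
    unfolding mat_mult_T_def mat_mult_def sum_product by (simp add: mult_ac)
  also have "\<dots> = (\<Sum>p<N. \<Sum>q<N. A r p * B c q * mat_mult_T N M M p q)"
    unfolding mat_mult_T_def sum_distrib_left
    by (subst sum.swap, rule sum.cong[OF refl], rule sum.swap)
  also have "\<dots> = (\<Sum>p<N. \<Sum>q<N. A r p * B c q * (if p = q then F else 0))"
    using M by (intro sum.cong refl) auto
  also have "\<dots> = (\<Sum>p<N. A r p * B c p * F)"
    by (intro sum.cong refl) (simp add: if_distrib cong: if_cong)
  finally show ?thesis by (simp add: mat_mult_T_def sum_distrib_left mult_ac)
qed

lemma of_int_round_zpm:
  fixes y :: real
  assumes "y \<in> {0, 1, -1}"
  shows "of_int (round y) = y"
  using assms round_of_int[of "-1", where 'a = real] by auto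

lemma round_zpm:
  fixes y :: real
  assumes "y \<in> {0, 1, -1}"
  shows "round y \<in> {0, 1, -1}"
  using assms round_of_int[of "-1", where 'a = real] by auto

text \<open>The design \<open>W (I\<^sub>n \<otimes> K)\<close>, computed separately on the coefficients of each variable;
  \<^const>\<open>round\<close> reads the \<open>{0,\<plusminus>1}\<close>-valued real entries of \<open>W\<close> as integers.\<close>
definition weighing_kron_design ::
    "nat \<Rightarrow> nat \<Rightarrow> (nat \<Rightarrow> nat \<Rightarrow> real) \<Rightarrow> (nat \<Rightarrow> nat \<Rightarrow> nat \<Rightarrow> int) \<Rightarrow> nat \<Rightarrow> nat \<Rightarrow> nat \<Rightarrow> int"
  where "weighing_kron_design N m W K r c j =
    mat_mult N (\<lambda>r l. round (W r l)) (I_kron m (\<lambda>p q. K p q j)) r c"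

lemma od_eval_weighing_kron_design:
  assumes W: "zpm_matrix N W" and r: "r < N"
  shows "od_eval u (weighing_kron_design N m W K) x r c = mat_mult N W (I_kron m (od_eval u K x)) r c"
proof -
  have round_W: "of_int (round (W r l)) = W r l" if "l < N" for l
    using W r that unfolding zpm_matrix_def by (intro of_int_round_zpm) blast
  have "od_eval u (weighing_kron_design N m W K) x r c
      = (\<Sum>j<u. \<Sum>l<N. of_int (round (W r l)) * (of_int (I_kron m (\<lambda>p q. K p q j) l c) * x j))"
    unfolding od_eval_def weighing_kron_design_def mat_mult_def
    by (simp add: sum_distrib_right mult.assoc)
  also have "\<dots> = (\<Sum>l<N. of_int (round (W r l)) * (\<Sum>j<u. of_int (I_kron m (\<lambda>p q. K p q j) l c) * x j))"
    by (simp add: sum.swap[of _ "{..<u}"] sum_distrib_left)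
  also have "\<dots> = mat_mult N W (I_kron m (od_eval u K x)) r c"
    unfolding mat_mult_def I_kron_def od_eval_def using round_W by (intro sum.cong) auto
  finally show ?thesis .
qed

lemma od_entry_scale:
  assumes "od_entry u e" and "a \<in> {0, 1, -1}"
  shows "od_entry u (\<lambda>j. a * e j)"
  using assms unfolding od_entry_def by auto

lemma od_entry_weighing_kron_design:
  fixes W :: "nat \<Rightarrow> nat \<Rightarrow> real"
  assumes W: "weighing_matrix (n * m) k W" and k: "0 < k"
    and kron: "zpm_matrix (n * m) (mat_mult (n * m) W (I_kron_J m))"
    and K: "orthogonal_design m u s K"
    and r: "r < n * m" and c: "c < n * m"
  shows "od_entry u (weighing_kron_design (n * m) m W K r c)"
proof (cases "\<exists>l<n * m. l div m = c div m \<and> W r l \<noteq> 0")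
  case True
  then obtain l0 where l0: "l0 < n * m" "l0 div m = c div m" "W r l0 \<noteq> 0" by blast
  have "m > 0" using c by (cases m) auto
  then have "od_entry u (K (l0 mod m) (c mod m))"
    using K unfolding orthogonal_design_def by simp
  moreover have "round (W r l0) \<in> {0, 1, -1}"
    using W r l0(1) unfolding weighing_matrix_def zpm_matrix_def by (intro round_zpm) blast
  moreover have "weighing_kron_design (n * m) m W K r c = (\<lambda>j. round (W r l0) * K (l0 mod m) (c mod m) j)"
  proof
    fix j
    let ?g = "\<lambda>l. round (W r l) * I_kron m (\<lambda>p q. K p q j) l c"
    have "?g l = 0" if "l < n * m" "l \<noteq> l0" for l
    proof (cases "l div m = c div m \<and> W r l \<noteq> 0")
      case True
      then show ?thesis
        using weighing_matrix_block_support_unique[OF W k kron r that(1) l0(1)] l0 that(2) by simp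
    qed (auto simp: I_kron_def)
    then have "sum ?g {..<n * m} = sum ?g {l0}"
      using l0(1) by (intro sum.mono_neutral_right) auto
    then show "weighing_kron_design (n * m) m W K r c j = round (W r l0) * K (l0 mod m) (c mod m) j"
      using l0(2) by (simp add: weighing_kron_design_def mat_mult_def I_kron_def)
  qed
  ultimately show ?thesis by (simp add: od_entry_scale)
next
  case False
  then have "weighing_kron_design (n * m) m W K r c = (\<lambda>j. 0)"
    unfolding weighing_kron_design_def mat_mult_def I_kron_def by (intro ext sum.neutral) auto
  then show ?thesis by (simp add: od_entry_def)
qed

lemma od_form_scale: "od_form u (\<lambda>j. k * t j) x = real k * od_form u t x"
  by (simp add: od_form_def sum_distrib_left mult_ac)

lemma mat_mult_T_od_eval_weighing_kron_design:
  assumes W1: "zpm_matrix (n * m) W1" and W2: "zpm_matrix (n * m) W2"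
    and K: "orthogonal_design m u s K"
    and r: "r < n * m" and c: "c < n * m"
  shows "mat_mult_T (n * m) (od_eval u (weighing_kron_design (n * m) m W1 K) x)
      (od_eval u (weighing_kron_design (n * m) m W2 K) x) r c
    = od_form u s x * mat_mult_T (n * m) W1 W2 r c"
proof -
  let ?E = "od_eval u K x"
  have "\<forall>p<n * m. \<forall>q<n * m. mat_mult_T (n * m) (I_kron m ?E) (I_kron m ?E) p q
      = (if p = q then od_form u s x else 0)"
    using K unfolding orthogonal_design_def by (blast intro: mat_mult_T_I_kron)
  then have "mat_mult_T (n * m) (mat_mult (n * m) W1 (I_kron m ?E)) (mat_mult (n * m) W2 (I_kron m ?E)) r c
      = od_form u s x * mat_mult_T (n * m) W1 W2 r c"
    by (rule mat_mult_T_mat_mult_orthogonal_right)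
  then show ?thesis
    unfolding mat_mult_T_def using od_eval_weighing_kron_design W1 W2 r c by simp
qed

lemma orthogonal_design_weighing_kron_design:
  fixes W :: "nat \<Rightarrow> nat \<Rightarrow> real"
  assumes W: "weighing_matrix (n * m) k W" and k: "0 < k"
    and kron: "zpm_matrix (n * m) (mat_mult (n * m) W (I_kron_J m))"
    and K: "orthogonal_design m u s K"
  shows "orthogonal_design (n * m) u (\<lambda>j. k * s j) (weighing_kron_design (n * m) m W K)"
  unfolding orthogonal_design_def
proof (intro conjI allI impI)
  fix r c assume "r < n * m" "c < n * m"
  then show "od_entry u (weighing_kron_design (n * m) m W K r c)"
    by (rule od_entry_weighing_kron_design[OF W k kron K])
next
  fix x r c assume rc: "r < n * m" "c < n * m"
  have "zpm_matrix (n * m) W" using W by (simp add: weighing_matrix_def)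
  then show "mat_mult_T (n * m) (od_eval u (weighing_kron_design (n * m) m W K) x)
      (od_eval u (weighing_kron_design (n * m) m W K) x) r c
    = (if r = c then od_form u (\<lambda>j. k * s j) x else 0)"
    using mat_mult_T_od_eval_weighing_kron_design[OF _ _ K rc] W rc
    unfolding weighing_matrix_def by (simp add: od_form_scale mult_ac)
qed

lemma weighing_kron_designs_unbiased:
  assumes W1: "zpm_matrix (n * m) W1" and W2: "zpm_matrix (n * m) W2"
    and W12: "zpm_matrix (n * m) (mat_mult_T (n * m) W1 W2)"
    and K: "orthogonal_design m u s K" and k: "0 < k"
  shows "\<exists>V. zpm_matrix (n * m) V \<and> (\<forall>x. \<forall>r<n * m. \<forall>c<n * m.
    mat_mult_T (n * m) (od_eval u (weighing_kron_design (n * m) m W1 K) x)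
      (od_eval u (weighing_kron_design (n * m) m W2 K) x) r c
    = od_form u (\<lambda>j. k * s j) x / sqrt (real (k ^ 2)) * of_int (V r c))"
proof (intro exI[of _ "\<lambda>r c. round (mat_mult_T (n * m) W1 W2 r c)"] conjI allI impI)
  show "zpm_matrix (n * m) (\<lambda>r c. round (mat_mult_T (n * m) W1 W2 r c))"
    using W12 round_zpm unfolding zpm_matrix_def by blast
next
  fix x r c assume rc: "r < n * m" "c < n * m"
  then have "of_int (round (mat_mult_T (n * m) W1 W2 r c)) = mat_mult_T (n * m) W1 W2 r c"
    using W12 unfolding zpm_matrix_def by (intro of_int_round_zpm) blast
  then show "mat_mult_T (n * m) (od_eval u (weighing_kron_design (n * m) m W1 K) x)
      (od_eval u (weighing_kron_design (n * m) m W2 K) x) r c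
    = od_form u (\<lambda>j. k * s j) x / sqrt (real (k ^ 2)) * of_int (round (mat_mult_T (n * m) W1 W2 r c))"
    using mat_mult_T_od_eval_weighing_kron_design[OF W1 W2 K rc] k by (simp add: od_form_scale)
qed

theorem proposition4p7:
  fixes n m k f u :: nat
    and W :: "nat \<Rightarrow> nat \<Rightarrow> nat \<Rightarrow> real"
    and K :: "nat \<Rightarrow> nat \<Rightarrow> nat \<Rightarrow> int"
    and s :: "nat \<Rightarrow> nat"
  assumes k_pos: "0 < k"
    and W_weighing: "\<forall>i<f. weighing_matrix (n * m) k (W i)"
    and W_qu: "\<forall>i<f. \<forall>j<f. i \<noteq> j \<longrightarrow> quasi_unbiased (n * m) k (k ^ 2) 1 (W i) (W j)"
    and W_kron: "\<forall>i<f. zpm_matrix (n * m) (mat_mult (n * m) (W i) (I_kron_J m))"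
    and K_od: "orthogonal_design m u s K"
  shows "\<exists>D. mutually_unbiased_ODs (n * m) u (\<lambda>j. k * s j) (real (k ^ 2)) f D"
proof
  have W_zpm: "zpm_matrix (n * m) (W i)" if "i < f" for i
    using W_weighing that by (simp add: weighing_matrix_def)
  show "mutually_unbiased_ODs (n * m) u (\<lambda>j. k * s j) (real (k ^ 2)) f
      (\<lambda>i. weighing_kron_design (n * m) m (W i) K)"
    unfolding mutually_unbiased_ODs_def
  proof (intro conjI allI impI)
    fix i assume "i < f"
    then show "orthogonal_design (n * m) u (\<lambda>j. k * s j) (weighing_kron_design (n * m) m (W i) K)"
      using W_weighing W_kron by (simp add: orthogonal_design_weighing_kron_design k_pos K_od)
  next
    fix i j assume ij: "i < f" "j < f" "i \<noteq> j"
    then have "zpm_matrix (n * m) (mat_mult_T (n * m) (W i) (W j))"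
      using W_qu unfolding quasi_unbiased_def weighing_matrix_def by simp
    then show "\<exists>V. zpm_matrix (n * m) V \<and> (\<forall>x. \<forall>r<n * m. \<forall>c<n * m.
        mat_mult_T (n * m) (od_eval u (weighing_kron_design (n * m) m (W i) K) x)
          (od_eval u (weighing_kron_design (n * m) m (W j) K) x) r c
        = od_form u (\<lambda>j. k * s j) x / sqrt (real (k ^ 2)) * of_int (V r c))"
      using ij by (intro weighing_kron_designs_unbiased W_zpm K_od k_pos)
  qed (use k_pos in simp)
qed

end
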